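(* Let $[\mu]\in\mathbb PV_n$ be a critical point of $F_n$ and $[\lambda]\in\mathbb PV_m$ a critical point of $F_m$. Then there exists $t\in\mathbb C$ such that $[\mu\oplus t\lambda]$ is a critical point of $F_{n+m}$, where $\mu\oplus t\lambda$ is the algebra on $\mathbb C^{n+m}=\mathbb C^n\oplus\mathbb C^m$ (orthogonal sum) given by $(\mu\oplus t\lambda)(X_1+Y_1,X_2+Y_2)=\mu(X_1,X_2)+t\lambda(Y_1,Y_2)$ for $X_i\in\mathbb C^n$, $Y_i\in\mathbb C^m$.
   Context: $V_k$ denotes the space of bilinear maps $\mathbb C^k\times\mathbb C^k\to\mathbb C^k$ with the standard Hermitian inner products; $F_k:\mathbb PV_k\to\mathbb R$ is $F_k([\mu])=\operatorname{tr}\mathrm M_\mu^2/\|\mu\|^4$, where $\|\mu\|^2=\sum_{i,j}\|\mu(X_i,X_j)\|^2$ for an orthonormal basis $\{X_i\}$, and $\mathrm M_\mu=2\sum_i L^\mu_{X_i}(L^\mu_{X_i})^*-2\sum_i (L^\mu_{X_i})^*L^\mu_{X_i}-2\sum_i (R^\mu_{X_i})^*R^\mu_{X_i}$ with $L^\mu_XY=\mu(X,Y)$, $R^\mu_XY=\mu(Y,X)$. It is known that $[\mu]$ is a critical point of $F_k$ iff $\mathrm M_\mu=c_\mu I+D_\mu$ for some $c_\mu\in\mathbb R$ and some derivation $D_\mu$ of $\mu$. *)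

theory Defs
  imports Complex_Main
begin

text \<open>A vector of C^k is represented by its coordinates w.r.t. the standard
orthonormal basis e_0,...,e_{k-1}. A bilinear map mu : C^k x C^k -> C^k is represented by its
structure constants: mu(e_i,e_j) = sum_l (a i j l) e_l, where a i j l = 0 unless i,j,l < k.
Matrices of size k x k are functions nat => nat => complex, entry (row, column),
only entries with indices < k being relevant.\<close>

type_synonym alg = "nat \<Rightarrow> nat \<Rightarrow> nat \<Rightarrow> complex"
type_synonym cmat = "nat \<Rightarrow> nat \<Rightarrow> complex"

definition in_V :: "nat \<Rightarrow> alg \<Rightarrow> bool" where
  "in_V k a \<longleftrightarrow> (\<forall>i j l. \<not> (i < k \<and> j < k \<and> l < k) \<longrightarrow> a i j l = 0)"

definition alg_norm_sq :: "nat \<Rightarrow> alg \<Rightarrow> real" where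
  "alg_norm_sq k a = (\<Sum>i<k. \<Sum>j<k. \<Sum>l<k. (cmod (a i j l))\<^sup>2)"

definition alg_add :: "alg \<Rightarrow> alg \<Rightarrow> alg" where
  "alg_add a b = (\<lambda>i j l. a i j l + b i j l)"

definition alg_scale :: "complex \<Rightarrow> alg \<Rightarrow> alg" where
  "alg_scale c a = (\<lambda>i j l. c * a i j l)"

text \<open>Left multiplication L_{e_i}: column j is mu(e_i,e_j), so entry (l,j) is a i j l.\<close>
definition Lmat :: "alg \<Rightarrow> nat \<Rightarrow> cmat" where
  "Lmat a i = (\<lambda>l j. a i j l)"

text \<open>Right multiplication R_{e_i}: column j is mu(e_j,e_i), so entry (l,j) is a j i l.\<close>
definition Rmat :: "alg \<Rightarrow> nat \<Rightarrow> cmat" where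
  "Rmat a i = (\<lambda>l j. a j i l)"

definition mat_mult :: "nat \<Rightarrow> cmat \<Rightarrow> cmat \<Rightarrow> cmat" where
  "mat_mult k A B = (\<lambda>r c. \<Sum>s<k. A r s * B s c)"

definition mat_adj :: "cmat \<Rightarrow> cmat" where
  "mat_adj A = (\<lambda>r c. cnj (A c r))"

definition mat_trace :: "nat \<Rightarrow> cmat \<Rightarrow> complex" where
  "mat_trace k A = (\<Sum>r<k. A r r)"

definition Mmat :: "nat \<Rightarrow> alg \<Rightarrow> cmat" where
  "Mmat k a = (\<lambda>r c.
      2 * (\<Sum>i<k. mat_mult k (Lmat a i) (mat_adj (Lmat a i)) r c)
    - 2 * (\<Sum>i<k. mat_mult k (mat_adj (Lmat a i)) (Lmat a i) r c)
    - 2 * (\<Sum>i<k. mat_mult k (mat_adj (Rmat a i)) (Rmat a i) r c))"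

text \<open>F_k(mu) = tr(M_mu^2) / ||mu||^4 (tr M_mu^2 is real since M_mu is Hermitian).\<close>
definition Ffun :: "nat \<Rightarrow> alg \<Rightarrow> real" where
  "Ffun k a = Re (mat_trace k (mat_mult k (Mmat k a) (Mmat k a))) / (alg_norm_sq k a)\<^sup>2"

text \<open>[mu] is a critical point of F_k on PV_k: mu is a nonzero element of V_k and the
(scale-invariant) function F_k on V_k - {0} has vanishing differential at mu, i.e. all real
directional derivatives in directions of V_k (as a real vector space) vanish.\<close>
definition critical :: "nat \<Rightarrow> alg \<Rightarrow> bool" where
  "critical k a \<longleftrightarrow> in_V k a \<and> alg_norm_sq k a \<noteq> 0 \<and>
     (\<forall>b. in_V k b \<longrightarrow>
        ((\<lambda>s::real. Ffun k (alg_add a (alg_scale (complex_of_real s) b))) has_real_derivative 0) (at 0))"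

text \<open>The direct sum mu \<oplus> t lambda on C^(n+m) = C^n \<oplus> C^m, the C^m factor occupying
the coordinates n,...,n+m-1.\<close>
definition alg_dsum :: "nat \<Rightarrow> alg \<Rightarrow> complex \<Rightarrow> nat \<Rightarrow> alg \<Rightarrow> alg" where
  "alg_dsum n a t m b = (\<lambda>i j l.
     if i < n \<and> j < n \<and> l < n then a i j l
     else if n \<le> i \<and> i < n + m \<and> n \<le> j \<and> j < n + m \<and> n \<le> l \<and> l < n + m
       then t * b (i - n) (j - n) (l - n)
     else 0)"

end

theory Submission
  imports Defs
begin

text \<open>Along a real line a + s b, F is a quotient of polynomials in s, so [a] is critical iff,
for every direction b in V_k, the first-order variation of tr M_a^2 is 2 rho_a times that of
|a|^2, where rho_a = tr M_a^2 / |a|^2 is positive because tr M_a = -2 |a|^2. For real t the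
matrix M of mu + t lambda is block diagonal with blocks M_mu and t^2 M_lambda, so tr M^2, the
norm square and their variations split into a mu-part plus a lambda-part weighted by t^4, t^2
(resp. t^3, t). Choosing t^2 rho_lambda = rho_mu makes the ratio of the direct sum equal to
rho_mu, and the critical point equations of mu and lambda add up to that of the direct sum.\<close>

lemma sum_lessThan_add:
  fixes n m :: nat
  shows "(\<Sum>i<n + m. f i) = (\<Sum>i<n. f i) + (\<Sum>i<m. f (i + n))"
proof -
  have "(\<Sum>i<n + m. f i) = (\<Sum>i<n. f i) + (\<Sum>i\<in>{n..<n + m}. f i)"
    using sum.atLeastLessThan_concat[of 0 n "n + m" f] by (simp add: atLeast0LessThan)
  also have "(\<Sum>i\<in>{n..<n + m}. f i) = (\<Sum>i<m. f (i + n))"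
    using sum.shift_bounds_nat_ivl[of f 0 n m] by (simp add: atLeast0LessThan add.commute)
  finally show ?thesis .
qed

definition Mpol :: "nat \<Rightarrow> alg \<Rightarrow> alg \<Rightarrow> cmat" where
  "Mpol k a b = (\<lambda>r c. 2 * (\<Sum>i<k. \<Sum>s<k. a i s r * cnj (b i s c))
    - 2 * (\<Sum>i<k. \<Sum>s<k. cnj (b i r s) * a i c s)
    - 2 * (\<Sum>i<k. \<Sum>s<k. cnj (b r i s) * a c i s))"

definition Mdir :: "nat \<Rightarrow> alg \<Rightarrow> alg \<Rightarrow> cmat" where
  "Mdir k a b = (\<lambda>r c. Mpol k a b r c + Mpol k b a r c)"

definition trace_prod :: "nat \<Rightarrow> cmat \<Rightarrow> cmat \<Rightarrow> complex" where
  "trace_prod k X Y = (\<Sum>r<k. \<Sum>c<k. X r c * Y c r)"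

definition tr_M_sq :: "nat \<Rightarrow> alg \<Rightarrow> real" where
  "tr_M_sq k a = Re (trace_prod k (Mmat k a) (Mmat k a))"

definition tr_M_sq_dir :: "nat \<Rightarrow> alg \<Rightarrow> alg \<Rightarrow> real" where
  "tr_M_sq_dir k a b = 2 * Re (trace_prod k (Mmat k a) (Mdir k a b))"

definition norm_sq_dir :: "nat \<Rightarrow> alg \<Rightarrow> alg \<Rightarrow> real" where
  "norm_sq_dir k a b = (\<Sum>i<k. \<Sum>j<k. \<Sum>l<k. 2 * Re (a i j l * cnj (b i j l)))"

definition tr_M_sq_ratio :: "nat \<Rightarrow> alg \<Rightarrow> real" where
  "tr_M_sq_ratio k a = tr_M_sq k a / alg_norm_sq k a"

lemma Mmat_eq_Mpol: "Mmat k a = Mpol k a a"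
  by (simp add: Mmat_def Mpol_def mat_mult_def Lmat_def Rmat_def mat_adj_def)

lemma Ffun_eq: "Ffun k a = tr_M_sq k a / (alg_norm_sq k a)\<^sup>2"
  by (simp add: Ffun_def tr_M_sq_def trace_prod_def mat_trace_def mat_mult_def)

lemma Mpol_add_left: "Mpol k (alg_add a a') b r c = Mpol k a b r c + Mpol k a' b r c"
  by (simp add: Mpol_def alg_add_def algebra_simps sum.distrib)

lemma Mpol_add_right: "Mpol k a (alg_add b b') r c = Mpol k a b r c + Mpol k a b' r c"
  by (simp add: Mpol_def alg_add_def algebra_simps sum.distrib)

lemma Mpol_scale_left: "Mpol k (alg_scale z a) b r c = z * Mpol k a b r c"
  by (simp add: Mpol_def alg_scale_def algebra_simps sum_distrib_left)

lemma Mpol_scale_right: "Mpol k a (alg_scale z b) r c = cnj z * Mpol k a b r c"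
  by (simp add: Mpol_def alg_scale_def algebra_simps sum_distrib_left)

lemma Mmat_line:
  "Mmat k (alg_add a (alg_scale (of_real s) b)) =
     (\<lambda>r c. Mmat k a r c + of_real s * Mdir k a b r c + (of_real s)\<^sup>2 * Mmat k b r c)"
  by (intro ext) (simp add: Mmat_eq_Mpol Mpol_add_left Mpol_add_right Mpol_scale_left
      Mpol_scale_right Mdir_def algebra_simps power2_eq_square)

lemma trace_prod_commute: "trace_prod k X Y = trace_prod k Y X"
  unfolding trace_prod_def by (subst sum.swap) (simp add: mult.commute)

lemma trace_prod_quadratic:
  fixes z :: complex and X0 X1 X2 :: cmat
  defines "X \<equiv> \<lambda>r c. X0 r c + z * X1 r c + z\<^sup>2 * X2 r c"
  shows "trace_prod k X X = trace_prod k X0 X0 + z * (2 * trace_prod k X0 X1)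
     + z\<^sup>2 * (2 * trace_prod k X0 X2 + trace_prod k X1 X1)
     + z ^ 3 * (2 * trace_prod k X1 X2) + z ^ 4 * trace_prod k X2 X2"
proof -
  have "X r c * X c r = X0 r c * X0 c r + z * (X0 r c * X1 c r + X1 r c * X0 c r)
      + z\<^sup>2 * (X0 r c * X2 c r + X1 r c * X1 c r + X2 r c * X0 c r)
      + z ^ 3 * (X1 r c * X2 c r + X2 r c * X1 c r) + z ^ 4 * (X2 r c * X2 c r)" for r c
    unfolding X_def by (simp add: algebra_simps power2_eq_square power3_eq_cube power4_eq_xxxx)
  then have "trace_prod k X X = trace_prod k X0 X0 + z * (trace_prod k X0 X1 + trace_prod k X1 X0)
      + z\<^sup>2 * (trace_prod k X0 X2 + trace_prod k X1 X1 + trace_prod k X2 X0)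
      + z ^ 3 * (trace_prod k X1 X2 + trace_prod k X2 X1) + z ^ 4 * trace_prod k X2 X2"
    unfolding trace_prod_def by (simp add: sum.distrib sum_distrib_left algebra_simps)
  then show ?thesis
    by (simp add: trace_prod_commute[of k X1 X0] trace_prod_commute[of k X2 X0]
        trace_prod_commute[of k X2 X1])
qed

lemma tr_M_sq_line:
  "\<exists>c2 c3 c4. \<forall>s. tr_M_sq k (alg_add a (alg_scale (of_real s) b)) =
     tr_M_sq k a + s * tr_M_sq_dir k a b + s\<^sup>2 * c2 + s ^ 3 * c3 + s ^ 4 * c4"
  unfolding tr_M_sq_def tr_M_sq_dir_def Mmat_line trace_prod_quadratic
  by (intro exI allI) (simp flip: of_real_power)

lemma alg_norm_sq_line:
  "alg_norm_sq k (alg_add a (alg_scale (of_real s) b)) =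
     alg_norm_sq k a + s * norm_sq_dir k a b + s\<^sup>2 * alg_norm_sq k b"
proof -
  have "(cmod (x + of_real s * y))\<^sup>2 = (cmod x)\<^sup>2 + s * (2 * Re (x * cnj y)) + s\<^sup>2 * (cmod y)\<^sup>2"
    for x y :: complex
    by (simp add: cmod_power2 power2_sum power_mult_distrib algebra_simps)
  then show ?thesis
    unfolding alg_norm_sq_def norm_sq_dir_def alg_add_def alg_scale_def
    by (simp only: sum.distrib sum_distrib_left)
qed

lemma Ffun_line_deriv:
  assumes "alg_norm_sq k a \<noteq> 0"
  shows "((\<lambda>s. Ffun k (alg_add a (alg_scale (of_real s) b))) has_real_derivative
     (tr_M_sq_dir k a b * alg_norm_sq k a - 2 * tr_M_sq k a * norm_sq_dir k a b)
       / (alg_norm_sq k a) ^ 3) (at 0)"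
proof -
  obtain c2 c3 c4 where tr: "\<And>s. tr_M_sq k (alg_add a (alg_scale (of_real s) b)) =
     tr_M_sq k a + s * tr_M_sq_dir k a b + s\<^sup>2 * c2 + s ^ 3 * c3 + s ^ 4 * c4"
    using tr_M_sq_line by blast
  show ?thesis
    unfolding Ffun_eq tr alg_norm_sq_line
    by (rule derivative_eq_intros refl | use assms in \<open>simp add: field_simps eval_nat_numeral\<close>)+
qed

lemma critical_iff:
  "critical k a \<longleftrightarrow> in_V k a \<and> alg_norm_sq k a \<noteq> 0 \<and>
     (\<forall>b. in_V k b \<longrightarrow> tr_M_sq_dir k a b = 2 * tr_M_sq_ratio k a * norm_sq_dir k a b)"
proof -
  have "((\<lambda>s. Ffun k (alg_add a (alg_scale (of_real s) b))) has_real_derivative 0) (at 0)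
      \<longleftrightarrow> tr_M_sq_dir k a b = 2 * tr_M_sq_ratio k a * norm_sq_dir k a b"
    if N: "alg_norm_sq k a \<noteq> 0" for b
  proof -
    have "((\<lambda>s. Ffun k (alg_add a (alg_scale (of_real s) b))) has_real_derivative 0) (at 0)
        \<longleftrightarrow> (tr_M_sq_dir k a b * alg_norm_sq k a - 2 * tr_M_sq k a * norm_sq_dir k a b)
             / (alg_norm_sq k a) ^ 3 = 0"
      using Ffun_line_deriv[OF N, of b] DERIV_unique by metis
    with N show ?thesis by (simp add: tr_M_sq_ratio_def field_simps)
  qed
  then show ?thesis unfolding critical_def by auto
qed

lemma alg_norm_sq_nonneg: "0 \<le> alg_norm_sq k a"
  unfolding alg_norm_sq_def by (intro sum_nonneg) auto

lemma Mmat_hermitian: "Mmat k a c r = cnj (Mmat k a r c)"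
  by (simp add: Mmat_eq_Mpol Mpol_def cnj_sum mult.commute)

lemma mat_trace_Mmat: "mat_trace k (Mmat k a) = - 2 * of_real (alg_norm_sq k a)"
proof -
  define N where "N = (\<Sum>i<k. \<Sum>j<k. \<Sum>l<k. of_real ((cmod (a i j l))\<^sup>2) :: complex)"
  have sq: "x * cnj x = of_real ((cmod x)\<^sup>2)" "cnj x * x = of_real ((cmod x)\<^sup>2)" for x
    by (simp_all add: complex_norm_square mult.commute del: of_real_power)
  have "(\<Sum>r<k. \<Sum>i<k. \<Sum>s<k. a i s r * cnj (a i s r)) =
      (\<Sum>i<k. \<Sum>r<k. \<Sum>s<k. a i s r * cnj (a i s r))"
    by (rule sum.swap)
  also have "\<dots> = N"
    unfolding N_def sq by (rule sum.cong[OF refl], rule sum.swap)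
  moreover have "(\<Sum>r<k. \<Sum>i<k. \<Sum>s<k. cnj (a i r s) * a i r s) = N"
    unfolding N_def sq by (rule sum.swap)
  moreover have "(\<Sum>r<k. \<Sum>i<k. \<Sum>s<k. cnj (a r i s) * a r i s) = N"
    unfolding N_def sq by simp
  moreover have "N = of_real (alg_norm_sq k a)"
    unfolding N_def alg_norm_sq_def by simp
  ultimately show ?thesis
    unfolding mat_trace_def Mmat_eq_Mpol Mpol_def
    by (simp add: sum.distrib sum_subtractf flip: sum_distrib_left)
qed

lemma tr_M_sq_pos:
  assumes "alg_norm_sq k a \<noteq> 0"
  shows "0 < tr_M_sq k a"
proof -
  let ?M = "Mmat k a"
  have "?M r c * ?M c r = of_real ((cmod (?M r c))\<^sup>2)" for r c
    by (simp add: Mmat_hermitian[of k a c r] complex_norm_square del: of_real_power)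
  then have tr: "tr_M_sq k a = (\<Sum>r<k. \<Sum>c<k. (cmod (?M r c))\<^sup>2)"
    by (simp add: tr_M_sq_def trace_prod_def)
  have "\<exists>r<k. ?M r r \<noteq> 0"
  proof (rule ccontr)
    assume "\<not> (\<exists>r<k. ?M r r \<noteq> 0)"
    then have "mat_trace k ?M = 0"
      by (simp add: mat_trace_def)
    with mat_trace_Mmat[of k a] assms show False
      by simp
  qed
  then obtain r where r: "r < k" "?M r r \<noteq> 0"
    by blast
  have "0 < (cmod (?M r r))\<^sup>2"
    using r by simp
  also have "\<dots> \<le> (\<Sum>c<k. (cmod (?M r c))\<^sup>2)"
    using r by (intro member_le_sum) auto
  also have "\<dots> \<le> tr_M_sq k a"
    unfolding tr using r by (intro member_le_sum sum_nonneg) auto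
  finally show ?thesis .
qed

lemma tr_M_sq_ratio_pos:
  assumes "critical k a"
  shows "0 < tr_M_sq_ratio k a"
proof -
  have "alg_norm_sq k a \<noteq> 0"
    using assms by (simp add: critical_def)
  then show ?thesis
    unfolding tr_M_sq_ratio_def
    using tr_M_sq_pos alg_norm_sq_nonneg[of k a] by (simp add: order_less_le)
qed

definition alg_restrict :: "nat \<Rightarrow> alg \<Rightarrow> alg" where
  "alg_restrict n x = (\<lambda>i j l. if i < n \<and> j < n \<and> l < n then x i j l else 0)"

definition alg_unshift :: "nat \<Rightarrow> nat \<Rightarrow> alg \<Rightarrow> alg" where
  "alg_unshift n m x =
     (\<lambda>i j l. if i < m \<and> j < m \<and> l < m then x (i + n) (j + n) (l + n) else 0)"

lemma in_V_alg_restrict: "in_V n (alg_restrict n x)"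
  by (simp add: in_V_def alg_restrict_def)

lemma in_V_alg_unshift: "in_V m (alg_unshift n m x)"
  by (simp add: in_V_def alg_unshift_def)

lemma in_V_alg_dsum: "in_V (n + m) (alg_dsum n a t m b)"
  unfolding in_V_def alg_dsum_def by auto

lemma trace_prod_block_diag:
  fixes n m :: nat
  assumes "\<And>r c. r < n \<Longrightarrow> c < m \<Longrightarrow> X r (c + n) = 0 \<and> X (c + n) r = 0"
  shows "trace_prod (n + m) X Y =
    trace_prod n X Y + trace_prod m (\<lambda>r c. X (r + n) (c + n)) (\<lambda>r c. Y (r + n) (c + n))"
  using assms unfolding trace_prod_def by (simp add: sum_lessThan_add sum.distrib)

lemma Mpol_dsum_upper:
  assumes "r < n" "c < n"
  shows "Mpol (n + m) (alg_dsum n mu t m lam) x r c = Mpol n mu (alg_restrict n x) r c"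
    and "Mpol (n + m) x (alg_dsum n mu t m lam) r c = Mpol n (alg_restrict n x) mu r c"
  using assms unfolding Mpol_def
  by (simp_all add: sum_lessThan_add sum.distrib alg_dsum_def alg_restrict_def)

lemma Mpol_dsum_lower:
  assumes "r < m" "c < m"
  shows "Mpol (n + m) (alg_dsum n mu t m lam) x (r + n) (c + n) =
      t * Mpol m lam (alg_unshift n m x) r c"
    and "Mpol (n + m) x (alg_dsum n mu t m lam) (r + n) (c + n) =
      cnj t * Mpol m (alg_unshift n m x) lam r c"
  using assms unfolding Mpol_def
  by (simp_all add: sum_lessThan_add sum.distrib alg_dsum_def alg_unshift_def
      sum_distrib_left right_diff_distrib mult_ac)

lemma Mmat_dsum_offdiag:
  assumes "r < n" "c < m"
  shows "Mmat (n + m) (alg_dsum n mu t m lam) r (c + n) = 0"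
    and "Mmat (n + m) (alg_dsum n mu t m lam) (c + n) r = 0"
  using assms unfolding Mmat_eq_Mpol Mpol_def
  by (simp_all add: sum_lessThan_add sum.distrib alg_dsum_def)

lemma Mmat_dsum_upper:
  assumes "r < n" "c < n"
  shows "Mmat (n + m) (alg_dsum n mu t m lam) r c = Mmat n mu r c"
  using assms unfolding Mmat_eq_Mpol Mpol_def
  by (simp add: sum_lessThan_add sum.distrib alg_dsum_def)

lemma Mmat_dsum_lower:
  assumes "r < m" "c < m"
  shows "Mmat (n + m) (alg_dsum n mu t m lam) (r + n) (c + n) = t * cnj t * Mmat m lam r c"
  using assms unfolding Mmat_eq_Mpol Mpol_def
  by (simp add: sum_lessThan_add sum.distrib alg_dsum_def sum_distrib_left right_diff_distrib
      mult_ac)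

lemma alg_norm_sq_dsum:
  "alg_norm_sq (n + m) (alg_dsum n mu t m lam) =
     alg_norm_sq n mu + (cmod t)\<^sup>2 * alg_norm_sq m lam"
  unfolding alg_norm_sq_def
  by (simp add: sum_lessThan_add sum.distrib alg_dsum_def sum_distrib_left norm_mult
      power_mult_distrib)

lemma norm_sq_dir_dsum:
  "norm_sq_dir (n + m) (alg_dsum n mu (of_real t) m lam) b =
     norm_sq_dir n mu (alg_restrict n b) + t * norm_sq_dir m lam (alg_unshift n m b)"
  unfolding norm_sq_dir_def
  by (simp add: sum_lessThan_add sum.distrib alg_dsum_def alg_restrict_def alg_unshift_def
      sum_distrib_left distrib_left mult_ac)

lemma tr_M_sq_dsum:
  "tr_M_sq (n + m) (alg_dsum n mu (of_real t) m lam) = tr_M_sq n mu + t ^ 4 * tr_M_sq m lam"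
  unfolding tr_M_sq_def
  by (simp add: trace_prod_block_diag Mmat_dsum_offdiag,
      simp add: trace_prod_def Mmat_dsum_upper Mmat_dsum_lower sum_distrib_left power4_eq_xxxx
        mult_ac flip: of_real_mult)

lemma Mdir_dsum_upper:
  assumes "r < n" "c < n"
  shows "Mdir (n + m) (alg_dsum n mu t m lam) x r c = Mdir n mu (alg_restrict n x) r c"
  using assms by (simp add: Mdir_def Mpol_dsum_upper)

lemma Mdir_dsum_lower:
  assumes "r < m" "c < m"
  shows "Mdir (n + m) (alg_dsum n mu (of_real t) m lam) x (r + n) (c + n) =
    of_real t * Mdir m lam (alg_unshift n m x) r c"
  using assms by (simp add: Mdir_def Mpol_dsum_lower distrib_left)

lemma tr_M_sq_dir_dsum:
  "tr_M_sq_dir (n + m) (alg_dsum n mu (of_real t) m lam) b =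
     tr_M_sq_dir n mu (alg_restrict n b) + t ^ 3 * tr_M_sq_dir m lam (alg_unshift n m b)"
  unfolding tr_M_sq_dir_def
  by (simp add: trace_prod_block_diag Mmat_dsum_offdiag,
      simp add: trace_prod_def Mmat_dsum_upper Mmat_dsum_lower Mdir_dsum_upper Mdir_dsum_lower
        sum_distrib_left power3_eq_cube mult_ac flip: of_real_mult)

lemma critical_alg_dsum:
  fixes t :: real
  assumes mu: "critical n mu" and lam: "critical m lam"
    and t: "t\<^sup>2 * tr_M_sq_ratio m lam = tr_M_sq_ratio n mu"
  shows "critical (n + m) (alg_dsum n mu (of_real t) m lam)"
proof -
  let ?nu = "alg_dsum n mu (of_real t) m lam"
  define \<rho> where "\<rho> = tr_M_sq_ratio n mu"
  have Nmu: "alg_norm_sq n mu > 0" and Nlam: "alg_norm_sq m lam > 0"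
    and dmu: "\<And>b. in_V n b \<Longrightarrow> tr_M_sq_dir n mu b = 2 * \<rho> * norm_sq_dir n mu b"
    and dlam: "\<And>b. in_V m b \<Longrightarrow>
      tr_M_sq_dir m lam b = 2 * tr_M_sq_ratio m lam * norm_sq_dir m lam b"
    using mu lam alg_norm_sq_nonneg[of n mu] alg_norm_sq_nonneg[of m lam]
    unfolding critical_iff \<rho>_def by (auto simp: order_less_le)
  have Nnu: "alg_norm_sq (n + m) ?nu = alg_norm_sq n mu + t\<^sup>2 * alg_norm_sq m lam"
    using alg_norm_sq_dsum by simp
  have Nnu_pos: "alg_norm_sq (n + m) ?nu > 0"
    unfolding Nnu using Nmu Nlam by (intro add_pos_nonneg) auto
  have t_lam: "t\<^sup>2 * tr_M_sq m lam = \<rho> * alg_norm_sq m lam"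
    using t Nlam unfolding \<rho>_def tr_M_sq_ratio_def by (simp add: field_simps)
  have "tr_M_sq (n + m) ?nu = \<rho> * alg_norm_sq n mu + t\<^sup>2 * (t\<^sup>2 * tr_M_sq m lam)"
    using Nmu unfolding tr_M_sq_dsum \<rho>_def tr_M_sq_ratio_def
    by (simp add: power4_eq_xxxx power2_eq_square)
  also have "\<dots> = \<rho> * alg_norm_sq (n + m) ?nu"
    unfolding t_lam Nnu by (simp add: algebra_simps)
  finally have ratio_nu: "tr_M_sq_ratio (n + m) ?nu = \<rho>"
    using Nnu_pos unfolding tr_M_sq_ratio_def by simp
  have "tr_M_sq_dir (n + m) ?nu b = 2 * \<rho> * norm_sq_dir (n + m) ?nu b" for b
  proof -
    have "t ^ 3 * tr_M_sq_dir m lam (alg_unshift n m b)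
        = 2 * t * (t\<^sup>2 * tr_M_sq_ratio m lam) * norm_sq_dir m lam (alg_unshift n m b)"
      by (simp add: dlam in_V_alg_unshift power3_eq_cube power2_eq_square)
    then show ?thesis
      unfolding tr_M_sq_dir_dsum norm_sq_dir_dsum t
      by (simp add: dmu in_V_alg_restrict \<rho>_def algebra_simps)
  qed
  then show ?thesis
    using Nnu_pos unfolding critical_iff ratio_nu by (simp add: in_V_alg_dsum)
qed

theorem mainTheorem4:
  fixes n m :: nat and mu lam :: alg
  assumes "critical n mu" and "critical m lam"
  shows "\<exists>t::complex. critical (n + m) (alg_dsum n mu t m lam)"
proof -
  define t where "t = sqrt (tr_M_sq_ratio n mu / tr_M_sq_ratio m lam)"
  have "t\<^sup>2 * tr_M_sq_ratio m lam = tr_M_sq_ratio n mu"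
    using tr_M_sq_ratio_pos[OF assms(1)] tr_M_sq_ratio_pos[OF assms(2)] by (simp add: t_def)
  then show ?thesis
    using critical_alg_dsum[OF assms] by blast
qed

end
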